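(* Let $G$ be a finite undirected weighted graph on $V=\{1,\dots,n\}$ with symmetric nonnegative weights $w(ij)=w(ji)\ge0$, degrees $d_i=\sum_j w(ij)$, $\mathrm{vol}(V)=\sum_i d_i>0$, and positive vertex measure $\mu_1,\dots,\mu_n>0$. For $x\in\mathbb R^n$ put $$\langle x,\mathcal M(x)\rangle_\mu=\frac12\sum_{i,j=1}^n\Big(\frac{d_id_j}{\mathrm{vol}(V)}-w(ij)\Big)|x_i-x_j|,$$ and for $x\neq0$ let $r^*_{\mathcal M}(x)=\langle x,\mathcal M(x)\rangle_\mu/\|x\|_\infty$, and $\lambda_1(r^*_{\mathcal M})=\max_{x\ne0}r^*_{\mathcal M}(x)$. Then for every $A\subseteq V$, $r^*_{\mathcal M}(\mathbb 1_A-\mathbb 1_{\overline A})=q(A)\,\mu(V)$, and $$q(G)=\max_{A\subseteq V}q(A)=\lambda_1(r^*_{\mathcal M})/\mu(V).$$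
   Context: $\|x\|_\infty=\max_i|x_i|$; $\mathbb 1_A$ is the indicator vector of $A$, $\overline A=V\setminus A$, $\mu(A)=\sum_{i\in A}\mu_i$, $\mathrm{vol}(A)=\sum_{i\in A}d_i$. Modularity: $Q(A)=\sum_{i,j\in A}w(ij)-\mathrm{vol}(A)^2/\mathrm{vol}(V)$, and $q(A)=\frac{2}{\mu(V)}Q(A)$. The quantity $\langle x,\mathcal M(x)\rangle_\mu$ is the paper's notation for the pairing with the nonlinear modularity operator; here it is simply defined by the displayed formula. *)

theory Defs
  imports Complex_Main "HOL-Library.Indicator_Function"
begin

text \<open>Vertex set V is the (finite) type 'v, i.e. V = UNIV. Weights w i j, vertex measure mu i.\<close>

definition deg :: "('v::finite \<Rightarrow> 'v \<Rightarrow> real) \<Rightarrow> 'v \<Rightarrow> real" where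
  "deg w i = (\<Sum>j\<in>UNIV. w i j)"

definition vol :: "('v::finite \<Rightarrow> 'v \<Rightarrow> real) \<Rightarrow> 'v set \<Rightarrow> real" where
  "vol w A = (\<Sum>i\<in>A. deg w i)"

definition meas :: "('v::finite \<Rightarrow> real) \<Rightarrow> 'v set \<Rightarrow> real" where
  "meas mu A = (\<Sum>i\<in>A. mu i)"

definition Qmod :: "('v::finite \<Rightarrow> 'v \<Rightarrow> real) \<Rightarrow> 'v set \<Rightarrow> real" where
  "Qmod w A = (\<Sum>i\<in>A. \<Sum>j\<in>A. w i j) - (vol w A)\<^sup>2 / vol w UNIV"

definition qmod :: "('v::finite \<Rightarrow> 'v \<Rightarrow> real) \<Rightarrow> ('v \<Rightarrow> real) \<Rightarrow> 'v set \<Rightarrow> real" where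
  "qmod w mu A = 2 / meas mu UNIV * Qmod w A"

definition qG :: "('v::finite \<Rightarrow> 'v \<Rightarrow> real) \<Rightarrow> ('v \<Rightarrow> real) \<Rightarrow> real" where
  "qG w mu = Max {qmod w mu A | A. A \<subseteq> UNIV}"

definition modpair :: "('v::finite \<Rightarrow> 'v \<Rightarrow> real) \<Rightarrow> ('v \<Rightarrow> real) \<Rightarrow> real" where
  "modpair w x = 1/2 * (\<Sum>i\<in>UNIV. \<Sum>j\<in>UNIV.
       (deg w i * deg w j / vol w UNIV - w i j) * \<bar>x i - x j\<bar>)"

definition linf :: "('v::finite \<Rightarrow> real) \<Rightarrow> real" where
  "linf x = Max (range (\<lambda>i. \<bar>x i\<bar>))"

definition rstar :: "('v::finite \<Rightarrow> 'v \<Rightarrow> real) \<Rightarrow> ('v \<Rightarrow> real) \<Rightarrow> real" where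
  "rstar w x = modpair w x / linf x"

text \<open>lambda_1(r*_M) = sup over x \<noteq> 0 of r*_M(x); the theorem also asserts it is attained (a max).\<close>
definition lambda1 :: "('v::finite \<Rightarrow> 'v \<Rightarrow> real) \<Rightarrow> real" where
  "lambda1 w = Sup (rstar w ` {x. x \<noteq> (\<lambda>_. 0)})"

end

theory Submission
  imports Defs
begin

text \<open>
  Write \<open>K i j = d\<^sub>i d\<^sub>j / vol(V) - w(ij)\<close>, so that the pairing is
  \<open>E(x) = 1/2 \<Sum>\<^sub>i\<^sub>j K i j |x\<^sub>i - x\<^sub>j|\<close> and the \<open>K\<close>-weight of the cut \<open>(A, V - A)\<close> is \<open>Q(A)\<close>.
  Raising the smallest value \<open>a\<close> of \<open>x\<close> to the next value \<open>b\<close> lowers \<open>E(x)\<close> by exactly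
  \<open>(b - a)\<close> times the cut weight of the level set \<open>{x = a}\<close>; peeling off the values one at a
  time gives \<open>E(x) \<le> (max x - min x) max\<^sub>A Q(A) \<le> 2 \<parallel>x\<parallel>\<^sub>\<infinity> max\<^sub>A Q(A)\<close>, and the sign vector
  of a maximiser \<open>A\<close> attains the bound.
\<close>

definition cut_weight :: "('v::finite \<Rightarrow> 'v \<Rightarrow> real) \<Rightarrow> 'v set \<Rightarrow> real" where
  "cut_weight K S = (\<Sum>i\<in>S. \<Sum>j\<in>-S. K i j)"

definition energy :: "('v::finite \<Rightarrow> 'v \<Rightarrow> real) \<Rightarrow> ('v \<Rightarrow> real) \<Rightarrow> real" where
  "energy K x = 1/2 * (\<Sum>i\<in>UNIV. \<Sum>j\<in>UNIV. K i j * \<bar>x i - x j\<bar>)"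

definition modularity_kernel :: "('v::finite \<Rightarrow> 'v \<Rightarrow> real) \<Rightarrow> 'v \<Rightarrow> 'v \<Rightarrow> real" where
  "modularity_kernel w i j = deg w i * deg w j / vol w UNIV - w i j"

definition sign_vector :: "'v set \<Rightarrow> 'v \<Rightarrow> real" where
  "sign_vector A i = indicator A i - indicator (- A) i"

lemma sum_UNIV_split:
  fixes g :: "'a::finite \<Rightarrow> real"
  shows "(\<Sum>i\<in>UNIV. g i) = (\<Sum>i\<in>S. g i) + (\<Sum>i\<in>-S. g i)"
  by (metis Compl_partition2 add.commute finite sum.union_disjoint disjoint_eq_subset_Compl subset_refl)

lemma sum_crossing_pairs_eq_cut:
  fixes K :: "'v::finite \<Rightarrow> 'v \<Rightarrow> real"
  assumes symK: "\<And>i j. K i j = K j i"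
  shows "(\<Sum>i\<in>UNIV. \<Sum>j\<in>UNIV. K i j * (if (i \<in> S) = (j \<in> S) then 0 else 1)) = 2 * cut_weight K S"
proof -
  let ?g = "\<lambda>i j. K i j * (if (i \<in> S) = (j \<in> S) then 0 else 1)"
  have inside: "(\<Sum>i\<in>S. \<Sum>j\<in>UNIV. ?g i j) = cut_weight K S"
    unfolding cut_weight_def by (rule sum.cong[OF refl]) (subst sum_UNIV_split[of _ S], simp)
  have "(\<Sum>i\<in>-S. \<Sum>j\<in>UNIV. ?g i j) = (\<Sum>i\<in>-S. \<Sum>j\<in>S. K i j)"
    by (rule sum.cong[OF refl]) (subst sum_UNIV_split[of _ S], simp)
  also have "\<dots> = cut_weight K S"
    unfolding cut_weight_def by (subst sum.swap) (simp add: symK)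
  finally show ?thesis
    using sum_UNIV_split[of "\<lambda>i. \<Sum>j\<in>UNIV. ?g i j" S] inside by simp
qed

lemma energy_sign_vector:
  fixes K :: "'v::finite \<Rightarrow> 'v \<Rightarrow> real"
  assumes "\<And>i j. K i j = K j i"
  shows "energy K (sign_vector A) = 2 * cut_weight K A"
proof -
  have "\<bar>sign_vector A i - sign_vector A j\<bar> = 2 * (if (i \<in> A) = (j \<in> A) then 0 else 1)" for i j
    by (simp add: sign_vector_def indicator_def)
  then show ?thesis
    using sum_crossing_pairs_eq_cut[OF assms, where S = A]
    by (simp add: energy_def sum_distrib_left mult.left_commute)
qed

lemma energy_raise_min:
  fixes K :: "'v::finite \<Rightarrow> 'v \<Rightarrow> real"
  assumes symK: "\<And>i j. K i j = K j i"
    and "a < b" and above: "\<And>i. x i \<noteq> a \<Longrightarrow> b \<le> x i"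
  shows "energy K x = energy K (\<lambda>i. if x i = a then b else x i) + (b - a) * cut_weight K {i. x i = a}"
proof -
  define y where "y = (\<lambda>i. if x i = a then b else x i)"
  define S where "S = {i. x i = a}"
  let ?cross = "\<lambda>i j. if (i \<in> S) = (j \<in> S) then 0 else 1 :: real"
  have "\<bar>x i - x j\<bar> = \<bar>y i - y j\<bar> + (b - a) * ?cross i j" for i j
    using above[of i] above[of j] \<open>a < b\<close> unfolding y_def S_def by auto
  then have "(\<Sum>i\<in>UNIV. \<Sum>j\<in>UNIV. K i j * \<bar>x i - x j\<bar>)
      = (\<Sum>i\<in>UNIV. \<Sum>j\<in>UNIV. K i j * \<bar>y i - y j\<bar>)
        + (b - a) * (\<Sum>i\<in>UNIV. \<Sum>j\<in>UNIV. K i j * ?cross i j)"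
    by (simp add: distrib_left sum.distrib sum_distrib_left mult.left_commute)
  then show ?thesis
    unfolding energy_def y_def[symmetric] S_def[symmetric] sum_crossing_pairs_eq_cut[OF symK]
    by (simp add: algebra_simps)
qed

lemma energy_le_oscillation:
  fixes K :: "'v::finite \<Rightarrow> 'v \<Rightarrow> real"
  assumes symK: "\<And>i j. K i j = K j i" and cut_le: "\<And>S. cut_weight K S \<le> M" and "0 \<le> M"
  shows "energy K x \<le> (Max (range x) - Min (range x)) * M"
proof (induction "card (range x)" arbitrary: x rule: less_induct)
  case less
  define R where "R = range x"
  define a where "a = Min R"
  have finR: "finite R" "R \<noteq> {}" and "a \<in> R" and a_le: "\<And>i. a \<le> x i"
    unfolding a_def R_def by auto
  show ?case
  proof (cases "card R \<le> 1")
    case True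
    then have flat: "\<bar>x i - x j\<bar> = 0" for i j
      using card_le_Suc0_iff_eq[OF finR(1)] unfolding R_def by auto
    have "energy K x = 0"
      unfolding energy_def flat by simp
    moreover have "Min R \<le> Max R"
      using finR by simp
    ultimately show ?thesis
      using \<open>0 \<le> M\<close> by (simp add: R_def)
  next
    case False
    define R' where "R' = R - {a}"
    have finR': "finite R'" and "R' \<subseteq> R"
      using finR unfolding R'_def by auto
    have "R' \<noteq> {}"
    proof
      assume "R' = {}"
      then have "R \<subseteq> {a}"
        unfolding R'_def by blast
      then have "card R \<le> 1"
        using card_mono[of "{a}" R] by simp
      with False show False
        by simp
    qed
    define b where "b = Min R'"
    have "b \<in> R'" and b_le: "\<And>t. t \<in> R' \<Longrightarrow> b \<le> t"
      unfolding b_def using finR' \<open>R' \<noteq> {}\<close> by auto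
    then have "b \<in> R" "b \<noteq> a"
      unfolding R'_def by auto
    moreover have "a \<le> b"
      unfolding a_def using finR \<open>b \<in> R\<close> by simp
    ultimately have "a < b"
      by simp
    have above: "\<And>i. x i \<noteq> a \<Longrightarrow> b \<le> x i"
      using b_le unfolding R'_def R_def by simp
    define y where "y = (\<lambda>i. if x i = a then b else x i)"
    have range_y: "range y = R'"
      using \<open>b \<in> R'\<close> unfolding y_def R'_def R_def by (auto split: if_splits)
    have "Max R \<in> R" "b \<le> Max R"
      using finR \<open>b \<in> R\<close> by auto
    then have "Max R \<in> R'"
      using \<open>a < b\<close> unfolding R'_def by auto
    then have "Max R \<le> Max R'"
      using finR' by simp
    moreover have "Max R' \<le> Max R"
      using Max_mono[OF \<open>R' \<subseteq> R\<close> \<open>R' \<noteq> {}\<close> finR(1)] .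
    ultimately have "Max R' = Max R"
      by simp
    have "card R' < card R"
      unfolding R'_def using finR(1) \<open>a \<in> R\<close> by (rule card_Diff1_less)
    then have IH: "energy K y \<le> (Max R - b) * M"
      using less[of y] range_y \<open>Max R' = Max R\<close> unfolding R_def b_def by simp
    have "energy K x = energy K y + (b - a) * cut_weight K {i. x i = a}"
      unfolding y_def by (rule energy_raise_min[OF symK \<open>a < b\<close> above])
    also have "\<dots> \<le> (Max R - b) * M + (b - a) * M"
      using IH cut_le \<open>a < b\<close> by (intro add_mono mult_left_mono) auto
    finally show ?thesis
      unfolding R_def a_def by (simp add: algebra_simps)
  qed
qed

lemma linf_ge: "\<bar>x i\<bar> \<le> linf x"
  unfolding linf_def by (rule Max_ge) auto

lemma linf_pos:
  assumes "x \<noteq> (\<lambda>_. 0)"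
  shows "0 < linf x"
proof -
  obtain i where "x i \<noteq> 0"
    using assms by auto
  then show ?thesis
    using linf_ge[of x i] by linarith
qed

lemma oscillation_le_linf: "Max (range x) - Min (range x) \<le> 2 * linf x"
proof -
  have "Max (range x) \<in> range x" "Min (range x) \<in> range x"
    by auto
  then obtain i j where "Max (range x) = x i" "Min (range x) = x j"
    by blast
  then show ?thesis
    using linf_ge[of x i] linf_ge[of x j] by linarith
qed

lemma linf_sign_vector: "linf (sign_vector A) = 1"
proof -
  have "range (\<lambda>i. \<bar>sign_vector A i\<bar>) = {1}"
    by (auto simp: sign_vector_def indicator_def)
  then show ?thesis
    unfolding linf_def by simp
qed

lemma sign_vector_nonzero: "sign_vector A \<noteq> (\<lambda>_. 0)"
proof
  assume "sign_vector A = (\<lambda>_. 0)"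
  then have "sign_vector A undefined = 0"
    by simp
  then show False
    by (cases "undefined \<in> A") (simp_all add: sign_vector_def)
qed

lemma modularity_kernel_sym:
  assumes "\<And>i j. w i j = w j i"
  shows "modularity_kernel w i j = modularity_kernel w j i"
  unfolding modularity_kernel_def using assms by (simp add: mult.commute)

lemma modpair_eq_energy: "modpair w = energy (modularity_kernel w)"
  unfolding modpair_def energy_def modularity_kernel_def by auto

lemma cut_modularity_kernel:
  fixes w :: "'v::finite \<Rightarrow> 'v \<Rightarrow> real"
  assumes "vol w UNIV \<noteq> 0"
  shows "cut_weight (modularity_kernel w) S = Qmod w S"
proof -
  define V where "V = vol w UNIV"
  have out_w: "(\<Sum>j\<in>-S. w i j) = deg w i - (\<Sum>j\<in>S. w i j)" for i
    unfolding deg_def using sum_UNIV_split[of "w i" S] by simp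
  have vol_compl: "vol w (-S) = V - vol w S"
    unfolding vol_def V_def using sum_UNIV_split[of "deg w" S] by simp
  have "cut_weight (modularity_kernel w) S = (\<Sum>i\<in>S. deg w i * vol w (-S) / V - (\<Sum>j\<in>-S. w i j))"
    unfolding cut_weight_def modularity_kernel_def V_def vol_def
    by (simp add: sum_subtractf sum_divide_distrib sum_distrib_left)
  also have "\<dots> = (\<Sum>i\<in>S. deg w i * (V - vol w S) / V - deg w i + (\<Sum>j\<in>S. w i j))"
    by (simp add: out_w vol_compl algebra_simps)
  also have "\<dots> = vol w S * (V - vol w S) / V - vol w S + (\<Sum>i\<in>S. \<Sum>j\<in>S. w i j)"
    unfolding vol_def
    by (simp add: sum.distrib sum_subtractf sum_divide_distrib sum_distrib_right)
  also have "\<dots> = Qmod w S"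
    unfolding Qmod_def V_def using assms by (simp add: field_simps power2_eq_square)
  finally show ?thesis .
qed

lemma Qmod_maximiser_exists: "\<exists>A0. \<forall>A. Qmod w A \<le> Qmod w A0"
  using Max_in[of "range (Qmod w)"] Max_ge[of "range (Qmod w)"] by fastforce

lemma Qmod_empty: "Qmod w {} = 0"
  by (simp add: Qmod_def vol_def)

context
  fixes w :: "'v::finite \<Rightarrow> 'v \<Rightarrow> real"
  assumes sym: "\<And>i j. w i j = w j i" and vol_pos: "vol w UNIV > 0"
begin

lemma rstar_sign_vector: "rstar w (sign_vector A) = 2 * Qmod w A"
proof -
  have "modpair w (sign_vector A) = 2 * cut_weight (modularity_kernel w) A"
    unfolding modpair_eq_energy by (rule energy_sign_vector[OF modularity_kernel_sym[of w, OF sym]])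
  then show ?thesis
    using cut_modularity_kernel[of w A] vol_pos by (simp add: rstar_def linf_sign_vector)
qed

lemma rstar_le_Qmod_max:
  assumes max: "\<And>A. Qmod w A \<le> Qmod w A0" and "x \<noteq> (\<lambda>_. 0)"
  shows "rstar w x \<le> 2 * Qmod w A0"
proof -
  have "0 \<le> Qmod w A0"
    using max[of "{}"] by (simp add: Qmod_empty)
  have cut_le: "cut_weight (modularity_kernel w) S \<le> Qmod w A0" for S
    using cut_modularity_kernel[of w S] vol_pos max[of S] by simp
  have "modpair w x \<le> (Max (range x) - Min (range x)) * Qmod w A0"
    unfolding modpair_eq_energy
    by (rule energy_le_oscillation[OF modularity_kernel_sym[of w, OF sym] cut_le \<open>0 \<le> Qmod w A0\<close>])
  also have "\<dots> \<le> 2 * linf x * Qmod w A0"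
    using oscillation_le_linf \<open>0 \<le> Qmod w A0\<close> by (rule mult_right_mono)
  finally show ?thesis
    unfolding rstar_def using linf_pos[OF \<open>x \<noteq> (\<lambda>_. 0)\<close>] by (simp add: divide_le_eq mult_ac)
qed

lemma lambda1_eq_Qmod_max:
  assumes max: "\<And>A. Qmod w A \<le> Qmod w A0"
  shows "lambda1 w = 2 * Qmod w A0"
  unfolding lambda1_def
proof (rule cSup_eq_maximum)
  show "2 * Qmod w A0 \<in> rstar w ` {x. x \<noteq> (\<lambda>_. 0)}"
    using rstar_sign_vector[of A0] sign_vector_nonzero[of A0]
    by (intro image_eqI[where x = "sign_vector A0"]) simp_all
qed (use rstar_le_Qmod_max[OF max] in auto)

end

lemma qG_eq_qmod_max:
  assumes "\<And>A. Qmod w A \<le> Qmod w A0" and "meas mu UNIV > 0"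
  shows "qG w mu = qmod w mu A0"
  unfolding qG_def
proof (rule Max_eqI)
  have "{qmod w mu A | A. A \<subseteq> UNIV} = range (qmod w mu)" by auto
  then show "finite {qmod w mu A | A. A \<subseteq> UNIV}" by simp
qed (use assms in \<open>auto simp: qmod_def divide_right_mono\<close>)

theorem theorem3p7:
  fixes w :: "'v::finite \<Rightarrow> 'v \<Rightarrow> real" and mu :: "'v \<Rightarrow> real"
  assumes sym: "\<And>i j. w i j = w j i"
    and nonneg: "\<And>i j. w i j \<ge> 0"
    and volpos: "vol w UNIV > 0"
    and mupos: "\<And>i. mu i > 0"
  shows "(\<forall>A. rstar w (\<lambda>i. indicator A i - indicator (- A) i) = qmod w mu A * meas mu UNIV)
    \<and> (\<exists>x. x \<noteq> (\<lambda>_. 0) \<and> rstar w x = lambda1 w)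
    \<and> (\<forall>x. x \<noteq> (\<lambda>_. 0) \<longrightarrow> rstar w x \<le> lambda1 w)
    \<and> qG w mu = Max {qmod w mu A | A. A \<subseteq> UNIV}
    \<and> qG w mu = lambda1 w / meas mu UNIV"
proof -
  have meas_pos: "meas mu UNIV > 0"
    unfolding meas_def by (rule sum_pos) (auto simp: mupos)
  obtain A0 where max: "\<And>A. Qmod w A \<le> Qmod w A0"
    using Qmod_maximiser_exists by blast
  note lambda1 = lambda1_eq_Qmod_max[OF sym volpos max]
  have "rstar w (sign_vector A) = qmod w mu A * meas mu UNIV" for A
    using rstar_sign_vector[OF sym volpos] meas_pos by (simp add: qmod_def)
  then have sign_vectors:
      "\<forall>A. rstar w (\<lambda>i. indicator A i - indicator (- A) i) = qmod w mu A * meas mu UNIV"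
    unfolding sign_vector_def by blast
  have attained: "\<exists>x. x \<noteq> (\<lambda>_. 0) \<and> rstar w x = lambda1 w"
    using sign_vector_nonzero rstar_sign_vector[OF sym volpos] lambda1 by metis
  have upper_bound: "\<forall>x. x \<noteq> (\<lambda>_. 0) \<longrightarrow> rstar w x \<le> lambda1 w"
    using rstar_le_Qmod_max[OF sym volpos max] lambda1 by simp
  have "qG w mu = lambda1 w / meas mu UNIV"
    using qG_eq_qmod_max[OF max meas_pos] lambda1 by (simp add: qmod_def)
  then show ?thesis
    using sign_vectors attained upper_bound qG_def[of w mu] by (intro conjI)
qed

end
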